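(* Let $k\ge 2$, let $V=\{(i_1,\ldots,i_{k-1}) : 1\le i_j\le k \text{ for all } j\}$, and for $j=1,\ldots,k-1$ let $\mathcal{H}_j$ be the $k$-uniform hypergraph on $V$ whose edges are the $k$-element sets $\{v^1,\ldots,v^k\}\subseteq V$ with $\{v^1_j,\ldots,v^k_j\}=\{1,\ldots,k\}$ (the $j$-th coordinates are pairwise distinct). Then each $\mathcal{H}_j$ admits a polychromatic $k$-coloring, and the chromatic number of $\bigcup_{j=1}^{k-1}\mathcal{H}_j$ equals $k$ (in particular it has no proper $(k-1)$-coloring).
   Context: A $k$-coloring of a hypergraph is a map from its vertex set to $\{1,\ldots,k\}$; it is polychromatic if every edge contains vertices of all $k$ colors, and proper if every edge with at least two vertices contains two vertices of different colors. The chromatic number is the smallest $k$ admitting a proper $k$-coloring. The union of hypergraphs on a common vertex set has as edge set the union of their edge sets. *)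

theory Defs
  imports Main
begin

definition is_coloring :: "'v set \<Rightarrow> nat \<Rightarrow> ('v \<Rightarrow> nat) \<Rightarrow> bool" where
  "is_coloring V k c \<longleftrightarrow> (\<forall>v\<in>V. c v \<in> {1..k})"

definition polychromatic :: "'v set \<Rightarrow> 'v set set \<Rightarrow> nat \<Rightarrow> ('v \<Rightarrow> nat) \<Rightarrow> bool" where
  "polychromatic V E k c \<longleftrightarrow> is_coloring V k c \<and> (\<forall>e\<in>E. {1..k} \<subseteq> c ` e)"

definition proper_coloring :: "'v set \<Rightarrow> 'v set set \<Rightarrow> nat \<Rightarrow> ('v \<Rightarrow> nat) \<Rightarrow> bool" where
  "proper_coloring V E k c \<longleftrightarrow> is_coloring V k c \<and>
     (\<forall>e\<in>E. card e \<ge> 2 \<longrightarrow> (\<exists>x\<in>e. \<exists>y\<in>e. c x \<noteq> c y))"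

definition chromatic_number :: "'v set \<Rightarrow> 'v set set \<Rightarrow> nat" where
  "chromatic_number V E = (LEAST k. \<exists>c. proper_coloring V E k c)"

text \<open>Vertex set: (k-1)-tuples with entries in {1..k}; coordinates indexed 0..k-2,
 represented as extensional functions (value 0 outside the index range).\<close>
definition grid :: "nat \<Rightarrow> (nat \<Rightarrow> nat) set" where
  "grid k = {v. (\<forall>j<k - 1. v j \<in> {1..k}) \<and> (\<forall>j\<ge>k - 1. v j = 0)}"

definition Hj :: "nat \<Rightarrow> nat \<Rightarrow> (nat \<Rightarrow> nat) set set" where
  "Hj k j = {e. e \<subseteq> grid k \<and> card e = k \<and> (\<lambda>v. v j) ` e = {1..k}}"

end

theory Submission
  imports Defs
begin

text \<open>Lower bound: if c is a proper (k-1)-colouring, each colour class a, being proper on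
 H_(a-1), must miss some value m_a in coordinate a-1, for otherwise one representative
 per value would form a monochromatic edge. The vertex (m_1, ..., m_(k-1)) then has no
 possible colour. Upper bound: colour each vertex by a value in {1..k} that none of its
 k-1 coordinates takes. In an edge of H_j the colour of any vertex x occurs as the j-th
 coordinate of some vertex y, whose own colour therefore differs from that of x.\<close>

lemma proper_coloring_mono:
  assumes "proper_coloring V E k c" and "k \<le> l"
  shows "proper_coloring V E l c"
  using assms unfolding proper_coloring_def is_coloring_def by auto

lemma proper_coloring_subset:
  assumes "proper_coloring V E k c" and "E' \<subseteq> E"
  shows "proper_coloring V E' k c"
  using assms unfolding proper_coloring_def by blast

lemma chromatic_number_eqI:
  assumes "proper_coloring V E k c" and "\<not> (\<exists>c. proper_coloring V E (k - 1) c)"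
  shows "chromatic_number V E = k"
  unfolding chromatic_number_def
proof (rule Least_equality)
  show "\<exists>c. proper_coloring V E k c" using assms(1) by blast
next
  fix l assume "\<exists>c. proper_coloring V E l c"
  then obtain c' where "proper_coloring V E l c'" ..
  show "k \<le> l"
  proof (rule ccontr)
    assume "\<not> k \<le> l"
    then have "l \<le> k - 1" by simp
    with \<open>proper_coloring V E l c'\<close> have "proper_coloring V E (k - 1) c'"
      by (rule proper_coloring_mono)
    with assms(2) show False by blast
  qed
qed

lemma polychromatic_coordinate:
  assumes "j < k - 1"
  shows "polychromatic (grid k) (Hj k j) k (\<lambda>v. v j)"
  using assms unfolding polychromatic_def is_coloring_def Hj_def grid_def by auto

lemma card_Hj_edge:
  assumes "e \<in> Hj k j"
  shows "card e = k"
  using assms unfolding Hj_def by blast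

lemma transversal_in_Hj:
  assumes "\<And>i. i \<in> {1..k} \<Longrightarrow> f i \<in> grid k \<and> f i j = i"
  shows "f ` {1..k} \<in> Hj k j"
proof -
  have "inj_on f {1..k}"
    by (rule inj_onI) (metis assms)
  then have "card (f ` {1..k}) = k" by (simp add: card_image)
  moreover have "(\<lambda>v. v j) ` f ` {1..k} = {1..k}"
    using assms by (force simp: image_image)
  ultimately show ?thesis
    using assms unfolding Hj_def by blast
qed

lemma proper_color_class_misses_value:
  assumes "k \<ge> 2" and "proper_coloring (grid k) (Hj k j) l c"
  shows "\<exists>m\<in>{1..k}. \<forall>v\<in>grid k. c v = a \<longrightarrow> v j \<noteq> m"
proof (rule ccontr)
  assume "\<not> ?thesis"
  then obtain f where f: "\<And>i. i \<in> {1..k} \<Longrightarrow> f i \<in> grid k \<and> c (f i) = a \<and> f i j = i"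
    by metis
  then have "f ` {1..k} \<in> Hj k j"
    by (intro transversal_in_Hj) blast
  moreover from this assms(1) have "card (f ` {1..k}) \<ge> 2" by (simp add: card_Hj_edge)
  ultimately obtain x y where "x \<in> f ` {1..k}" "y \<in> f ` {1..k}" "c x \<noteq> c y"
    using assms(2) unfolding proper_coloring_def by blast
  with f show False by auto
qed

theorem no_proper_coloring_Union_Hj:
  assumes "k \<ge> 2"
  shows "\<not> proper_coloring (grid k) (\<Union>j<k - 1. Hj k j) (k - 1) c"
proof
  assume proper: "proper_coloring (grid k) (\<Union>j<k - 1. Hj k j) (k - 1) c"
  have "\<forall>a\<in>{1..k - 1}. \<exists>m\<in>{1..k}. \<forall>v\<in>grid k. c v = a \<longrightarrow> v (a - 1) \<noteq> m"
  proof
    fix a assume "a \<in> {1..k - 1}"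
    then have "Hj k (a - 1) \<subseteq> (\<Union>j<k - 1. Hj k j)" by (intro UN_upper) auto
    with proper have "proper_coloring (grid k) (Hj k (a - 1)) (k - 1) c"
      by (rule proper_coloring_subset)
    with assms show "\<exists>m\<in>{1..k}. \<forall>v\<in>grid k. c v = a \<longrightarrow> v (a - 1) \<noteq> m"
      by (rule proper_color_class_misses_value)
  qed
  then obtain m where m: "\<And>a. a \<in> {1..k - 1} \<Longrightarrow>
      m a \<in> {1..k} \<and> (\<forall>v\<in>grid k. c v = a \<longrightarrow> v (a - 1) \<noteq> m a)"
    by metis
  define x where "x j = (if j < k - 1 then m (j + 1) else 0)" for j
  have x: "x \<in> grid k" unfolding grid_def x_def using m by auto
  define a where "a = c x"
  have a: "a \<in> {1..k - 1}"
    using x proper unfolding a_def proper_coloring_def is_coloring_def by blast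
  then have "x (a - 1) = m a" by (auto simp: x_def)
  with m[OF a] x show False unfolding a_def by blast
qed

lemma exists_value_missing_from_coordinates:
  fixes k :: nat and v :: "nat \<Rightarrow> nat"
  assumes "k \<ge> 1"
  shows "\<exists>i\<in>{1..k}. i \<notin> v ` {..<k - 1}"
proof (rule ccontr)
  assume "\<not> ?thesis"
  then have "k \<le> card (v ` {..<k - 1})"
    using card_mono[of "v ` {..<k - 1}" "{1..k}"] by auto
  moreover have "card (v ` {..<k - 1}) \<le> k - 1"
    using card_image_le[of "{..<k - 1}" v] by simp
  ultimately show False using assms by linarith
qed

lemma proper_coloring_avoiding_coordinates:
  assumes "k \<ge> 2" and c: "\<And>v. c v \<in> {1..k} \<and> c v \<notin> v ` {..<k - 1}"
  shows "proper_coloring (grid k) (\<Union>j<k - 1. Hj k j) k c"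
  unfolding proper_coloring_def is_coloring_def
proof (intro conjI ballI impI)
  fix v show "c v \<in> {1..k}" using c by blast
next
  fix e assume "e \<in> (\<Union>j<k - 1. Hj k j)"
  then obtain j where j: "j < k - 1" and e: "card e = k" "(\<lambda>v. v j) ` e = {1..k}"
    unfolding Hj_def by blast
  from e(1) assms(1) have "e \<noteq> {}" by auto
  then obtain x where x: "x \<in> e" by blast
  have "c x \<in> (\<lambda>v. v j) ` e" using c e(2) by blast
  then obtain y where "y \<in> e" "y j = c x" by auto
  moreover have "c y \<noteq> y j" using c j by blast
  ultimately show "\<exists>x\<in>e. \<exists>y\<in>e. c x \<noteq> c y" using x by metis
qed

theorem proper_coloring_Union_Hj:
  assumes "k \<ge> 2"
  shows "\<exists>c. proper_coloring (grid k) (\<Union>j<k - 1. Hj k j) k c"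
proof -
  have "\<exists>i\<in>{1..k}. i \<notin> v ` {..<k - 1}" for v
    using assms by (intro exists_value_missing_from_coordinates) simp
  then obtain c where "\<And>v. c v \<in> {1..k} \<and> c v \<notin> v ` {..<k - 1}" by metis
  with assms have "proper_coloring (grid k) (\<Union>j<k - 1. Hj k j) k c"
    by (rule proper_coloring_avoiding_coordinates)
  then show ?thesis by blast
qed

theorem mainTheorem2:
  fixes k :: nat
  assumes "k \<ge> 2"
  shows "(\<forall>j<k - 1. \<exists>c. polychromatic (grid k) (Hj k j) k c)
       \<and> chromatic_number (grid k) (\<Union>j<k - 1. Hj k j) = k
       \<and> \<not> (\<exists>c. proper_coloring (grid k) (\<Union>j<k - 1. Hj k j) (k - 1) c)"
proof (intro conjI)
  show "\<forall>j<k - 1. \<exists>c. polychromatic (grid k) (Hj k j) k c"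
    using polychromatic_coordinate by blast
  show lower: "\<not> (\<exists>c. proper_coloring (grid k) (\<Union>j<k - 1. Hj k j) (k - 1) c)"
    using no_proper_coloring_Union_Hj assms by blast
  from proper_coloring_Union_Hj[OF assms] obtain c
    where "proper_coloring (grid k) (\<Union>j<k - 1. Hj k j) k c" ..
  then show "chromatic_number (grid k) (\<Union>j<k - 1. Hj k j) = k"
    using lower by (rule chromatic_number_eqI)
qed

end
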